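(* Let $(V,E,W)$ and $(\tilde V,\tilde E,\tilde W)$ be finite connected weighted graphs with shortest-path metrics $d_E$ and $d_{\tilde E}$, let $f:V\to\tilde V$ be any map, and let $\mathcal{F}$ be a universal approximator. Fix enumerations of $V$ and $\tilde V$. For every $\epsilon>0$ there is $\hat f\in\bigcup_{c\in\mathbb{N}_+}\mathcal{F}_{\#V,\#\tilde V,c}$ such that the map $\hat T:V\to\mathcal{P}(\tilde V)$, $$\hat T(x)=\sum_{u\in\tilde V}\Big[P_{\Delta_{\#\tilde V}}\circ\hat f\big((d_E(x,v))_{v\in V}\big)\Big]_u\,\delta_u,$$ satisfies $\max_{x\in V}W_1\big(\hat T(x),\delta_{f(x)}\big)<\epsilon$, where $W_1$ is the 1-Wasserstein distance on probability measures on $(\tilde V,d_{\tilde E})$.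
   Context: A weighted graph $(V,E,W)$ has edge weights $W:E\to(0,\infty)$; it is connected if any two vertices are joined by a path, and $d_E(u,v)$ is the minimum over paths $u=v_1,\dots,v_T=v$ of $\sum_tW(\{v_t,v_{t+1}\})$. $\Delta_k$ is the standard simplex in $\mathbb{R}^k$ and $P_{\Delta_k}$ the Euclidean orthogonal projection onto it. A universal approximator is a family $\mathcal{F}=\{\mathcal{F}_{n,m,c}\}$, with $\mathcal{F}_{n,m,c}$ nested in $c$ sets of maps $\mathbb{R}^n\to\mathbb{R}^m$, together with a rate function $r(\omega,K,n,m,c)$ decreasing to $0$ in $c$, such that for every uniformly continuous $f:\mathbb{R}^n\to\mathbb{R}^m$ with continuous modulus $\omega$ and every compact $K$, some $\hat f\in\mathcal{F}_{n,m,c}$ satisfies $\sup_K\|f-\hat f\|\le r(\omega,K,n,m,c)$. *)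

theory Defs
  imports "HOL-Analysis.Analysis"
begin

definition weighted_graph :: "'a set \<Rightarrow> 'a set set \<Rightarrow> ('a set \<Rightarrow> real) \<Rightarrow> bool" where
  "weighted_graph V E W \<longleftrightarrow>
     (\<forall>e\<in>E. \<exists>u v. u \<in> V \<and> v \<in> V \<and> u \<noteq> v \<and> e = {u, v}) \<and> (\<forall>e\<in>E. W e > 0)"

definition is_path :: "'a set \<Rightarrow> 'a set set \<Rightarrow> 'a \<Rightarrow> 'a \<Rightarrow> 'a list \<Rightarrow> bool" where
  "is_path V E u v p \<longleftrightarrow> p \<noteq> [] \<and> hd p = u \<and> last p = v \<and> set p \<subseteq> V \<and>
     (\<forall>t. Suc t < length p \<longrightarrow> {p ! t, p ! Suc t} \<in> E)"

definition path_weight :: "('a set \<Rightarrow> real) \<Rightarrow> 'a list \<Rightarrow> real" where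
  "path_weight W p = (\<Sum>t<length p - 1. W {p ! t, p ! Suc t})"

definition graph_connected :: "'a set \<Rightarrow> 'a set set \<Rightarrow> bool" where
  "graph_connected V E \<longleftrightarrow> (\<forall>u\<in>V. \<forall>v\<in>V. \<exists>p. is_path V E u v p)"

definition graph_dist :: "'a set \<Rightarrow> 'a set set \<Rightarrow> ('a set \<Rightarrow> real) \<Rightarrow> 'a \<Rightarrow> 'a \<Rightarrow> real" where
  "graph_dist V E W u v = Inf {path_weight W p | p. is_path V E u v p}"

definition rvec :: "nat \<Rightarrow> (nat \<Rightarrow> real) set" where
  "rvec n = {x. \<forall>i\<ge>n. x i = 0}"

definition enorm :: "nat \<Rightarrow> (nat \<Rightarrow> real) \<Rightarrow> real" where
  "enorm n x = sqrt (\<Sum>i<n. (x i)\<^sup>2)"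

definition std_simplex :: "nat \<Rightarrow> (nat \<Rightarrow> real) set" where
  "std_simplex k = {y \<in> rvec k. (\<forall>i<k. 0 \<le> y i) \<and> (\<Sum>i<k. y i) = 1}"

definition proj_simplex :: "nat \<Rightarrow> (nat \<Rightarrow> real) \<Rightarrow> (nat \<Rightarrow> real)" where
  "proj_simplex k z = (THE y. y \<in> std_simplex k \<and>
      (\<forall>y'\<in>std_simplex k. enorm k (z - y) \<le> enorm k (z - y')))"

definition cont_modulus :: "(real \<Rightarrow> real) \<Rightarrow> bool" where
  "cont_modulus \<omega> \<longleftrightarrow> \<omega> 0 = 0 \<and> (\<forall>t\<ge>0. 0 \<le> \<omega> t) \<and> continuous_on {0..} \<omega>"

definition has_modulus :: "nat \<Rightarrow> nat \<Rightarrow> (real \<Rightarrow> real) \<Rightarrow> ((nat \<Rightarrow> real) \<Rightarrow> (nat \<Rightarrow> real)) \<Rightarrow> bool" where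
  "has_modulus n m \<omega> f \<longleftrightarrow>
     (\<forall>x\<in>rvec n. \<forall>y\<in>rvec n. enorm m (f x - f y) \<le> \<omega> (enorm n (x - y)))"

definition universal_approximator ::
  "(nat \<Rightarrow> nat \<Rightarrow> nat \<Rightarrow> ((nat \<Rightarrow> real) \<Rightarrow> (nat \<Rightarrow> real)) set) \<Rightarrow>
   ((real \<Rightarrow> real) \<Rightarrow> (nat \<Rightarrow> real) set \<Rightarrow> nat \<Rightarrow> nat \<Rightarrow> nat \<Rightarrow> real) \<Rightarrow> bool" where
  "universal_approximator F r \<longleftrightarrow>
     (\<forall>n m c c'. c \<le> c' \<longrightarrow> F n m c \<subseteq> F n m c') \<and>
     (\<forall>\<omega> K n m. antimono (\<lambda>c. r \<omega> K n m c) \<and> (\<lambda>c. r \<omega> K n m c) \<longlonglongrightarrow> 0) \<and>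
     (\<forall>n m f \<omega> K c. cont_modulus \<omega> \<and> has_modulus n m \<omega> f \<and> K \<subseteq> rvec n \<and> compact K \<longrightarrow>
        (\<exists>fh\<in>F n m c. \<forall>x\<in>K. enorm m (f x - fh x) \<le> r \<omega> K n m c))"

text \<open>Measures on the finite set S are given by their mass functions.\<close>
definition wasserstein1 :: "'b set \<Rightarrow> ('b \<Rightarrow> 'b \<Rightarrow> real) \<Rightarrow> ('b \<Rightarrow> real) \<Rightarrow> ('b \<Rightarrow> real) \<Rightarrow> real" where
  "wasserstein1 S d \<mu> \<nu> = Inf {(\<Sum>u\<in>S. \<Sum>v\<in>S. \<pi> u v * d u v) | \<pi>.
       (\<forall>u\<in>S. \<forall>v\<in>S. 0 \<le> \<pi> u v) \<and>
       (\<forall>u\<in>S. (\<Sum>v\<in>S. \<pi> u v) = \<mu> u) \<and> (\<forall>v\<in>S. (\<Sum>u\<in>S. \<pi> u v) = \<nu> v)}"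

definition dirac_mass :: "'b \<Rightarrow> 'b \<Rightarrow> real" where
  "dirac_mass b = (\<lambda>u. if u = b then 1 else 0)"

end

theory Submission
  imports Defs
begin

text \<open>Represent each vertex x of V by its vector of distances to all vertices. That vector
vanishes at x and is at least the smallest edge weight w at every other vertex, so a sum of tent
functions of width w is a Lipschitz map sending it exactly to the one-hot vector of f x. Approximate
this map by some fh from the universal approximator. Since the projection onto the simplex is a
nearest point, it lies at most twice as far from the one-hot vector as fh, so all but a small mass
sits on f x; moving the rest to f x costs at most the diameter of the target graph times that mass.\<close>

lemma abs_le_enorm:
  assumes "i < m"
  shows "\<bar>x i\<bar> \<le> enorm m x"
proof -
  have "(x i)\<^sup>2 \<le> (\<Sum>k<m. (x k)\<^sup>2)"
    by (rule member_le_sum) (use assms in auto)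
  then show ?thesis
    unfolding enorm_def by (metis real_sqrt_abs real_sqrt_le_mono)
qed

lemma enorm_power2: "(enorm m x)\<^sup>2 = (\<Sum>i<m. (x i)\<^sup>2)"
  unfolding enorm_def by (simp add: sum_nonneg)

lemma enorm_minus_commute: "enorm m (x - y) = enorm m (y - x)"
  unfolding enorm_def by (simp add: power2_commute)

lemma enorm_diff_triangle: "enorm m (x - z) \<le> enorm m (x - y) + enorm m (y - z)"
  using L2_set_triangle_ineq[of "\<lambda>i. x i - y i" "\<lambda>i. y i - z i" "{..<m}"]
  by (simp add: enorm_def L2_set_def)

lemma enorm_le_sum_abs: "enorm m x \<le> (\<Sum>i<m. \<bar>x i\<bar>)"
  using L2_set_le_sum_abs[of x "{..<m}"] by (simp add: enorm_def L2_set_def)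

lemma dirac_mass_in_std_simplex: "j < m \<Longrightarrow> dirac_mass j \<in> std_simplex m"
  by (auto simp: std_simplex_def rvec_def dirac_mass_def)

lemma std_simplex_le_1:
  assumes "y \<in> std_simplex m" "i < m"
  shows "y i \<le> 1"
proof -
  have "y i \<le> (\<Sum>k<m. y k)"
    by (rule member_le_sum) (use assms in \<open>auto simp: std_simplex_def\<close>)
  then show ?thesis
    using assms by (simp add: std_simplex_def)
qed

lemma compact_std_simplex: "compact (std_simplex m)"
proof -
  define K where "K i = (if i < m then {0..1} else {0::real})" for i :: nat
  have "compactin (product_topology (\<lambda>i. euclidean) UNIV) (PiE UNIV K)"
    unfolding compactin_PiE by (auto simp: K_def)
  then have "compact (PiE UNIV K)"
    by (simp add: euclidean_product_topology compactin_euclidean_iff)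
  moreover have "closed {y :: nat \<Rightarrow> real. (\<Sum>i<m. y i) = 1}"
    by (intro closed_Collect_eq continuous_intros) simp_all
  moreover have "std_simplex m = PiE UNIV K \<inter> {y. (\<Sum>i<m. y i) = 1}"
  proof (intro equalityI subsetI)
    fix y assume y: "y \<in> std_simplex m"
    then show "y \<in> PiE UNIV K \<inter> {y. (\<Sum>i<m. y i) = 1}"
      using std_simplex_le_1[OF y] by (auto simp: std_simplex_def rvec_def K_def)
  next
    fix y assume y: "y \<in> PiE UNIV K \<inter> {y. (\<Sum>i<m. y i) = 1}"
    then have yK: "y i \<in> K i" for i
      by (auto simp: PiE_def)
    have "y i = 0" if "m \<le> i" for i
      using yK[of i] that by (simp add: K_def)
    moreover have "0 \<le> y i" if "i < m" for i
      using yK[of i] that by (simp add: K_def)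
    ultimately show "y \<in> std_simplex m"
      using y by (simp add: std_simplex_def rvec_def)
  qed
  ultimately show ?thesis
    by (simp add: compact_Int_closed)
qed

lemma std_simplex_nearest_point_exists:
  assumes "0 < m"
  obtains y where "y \<in> std_simplex m"
    "\<And>y'. y' \<in> std_simplex m \<Longrightarrow> enorm m (z - y) \<le> enorm m (z - y')"
proof -
  have coord: "continuous_on (std_simplex m) (\<lambda>y. y i)" for i
    by (rule continuous_on_subset[OF continuous_on_product_coordinates subset_UNIV])
  have "std_simplex m \<noteq> {}"
    using dirac_mass_in_std_simplex[OF assms] by blast
  moreover have "continuous_on (std_simplex m) (\<lambda>y. enorm m (z - y))"
    unfolding enorm_def fun_diff_def
    by (intro continuous_on_real_sqrt continuous_on_sum continuous_on_power continuous_on_diff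
        continuous_on_const coord)
  ultimately show ?thesis
    using continuous_attains_inf[OF compact_std_simplex] that by blast
qed

text \<open>Uniqueness comes from the parallelogram law at the midpoint of two nearest points.\<close>
lemma std_simplex_nearest_point_unique:
  assumes y0: "y0 \<in> std_simplex m" "\<And>y'. y' \<in> std_simplex m \<Longrightarrow> enorm m (z - y0) \<le> enorm m (z - y')"
    and y1: "y1 \<in> std_simplex m" "\<And>y'. y' \<in> std_simplex m \<Longrightarrow> enorm m (z - y1) \<le> enorm m (z - y')"
  shows "y1 = y0"
proof -
  define ym where "ym i = (y0 i + y1 i) / 2" for i
  have "ym \<in> std_simplex m"
    using y0(1) y1(1)
    by (auto simp: std_simplex_def rvec_def ym_def sum.distrib sum_divide_distrib[symmetric])
  have "(enorm m (z - ym))\<^sup>2 =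
      ((enorm m (z - y0))\<^sup>2 + (enorm m (z - y1))\<^sup>2) / 2 - (\<Sum>i<m. (y0 i - y1 i)\<^sup>2) / 4"
  proof -
    have "(\<Sum>i<m. (z i - ym i)\<^sup>2) =
        (\<Sum>i<m. ((z i - y0 i)\<^sup>2 + (z i - y1 i)\<^sup>2) / 2 - (y0 i - y1 i)\<^sup>2 / 4)"
      by (rule sum.cong) (simp_all add: ym_def field_simps power2_eq_square)
    then show ?thesis
      by (simp add: enorm_power2 sum_subtractf sum.distrib flip: sum_divide_distrib)
  qed
  moreover have "enorm m (z - y0) = enorm m (z - y1)"
    using y0 y1 by (simp add: order_antisym)
  moreover have "(enorm m (z - y1))\<^sup>2 \<le> (enorm m (z - ym))\<^sup>2"
    using y1(2)[OF \<open>ym \<in> std_simplex m\<close>] by (intro power_mono) (simp_all add: enorm_def sum_nonneg)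
  ultimately have "(\<Sum>i<m. (y0 i - y1 i)\<^sup>2) \<le> 0"
    by simp
  then have "\<forall>i<m. (y0 i - y1 i)\<^sup>2 = 0"
    using sum_nonneg_eq_0_iff[of "{..<m}" "\<lambda>i. (y0 i - y1 i)\<^sup>2"]
      sum_nonneg[of "{..<m}" "\<lambda>i. (y0 i - y1 i)\<^sup>2"]
    by simp
  then have "y0 i = y1 i" for i
    using y0(1) y1(1) by (cases "i < m") (auto simp: std_simplex_def rvec_def)
  then show ?thesis
    by auto
qed

lemma proj_simplex_nearest:
  assumes "0 < m"
  shows "proj_simplex m z \<in> std_simplex m"
    and "y \<in> std_simplex m \<Longrightarrow> enorm m (z - proj_simplex m z) \<le> enorm m (z - y)"
proof -
  obtain y0 where "y0 \<in> std_simplex m"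
    "\<And>y'. y' \<in> std_simplex m \<Longrightarrow> enorm m (z - y0) \<le> enorm m (z - y')"
    using std_simplex_nearest_point_exists[OF assms, of z] by blast
  then have "\<exists>!y. y \<in> std_simplex m \<and> (\<forall>y'\<in>std_simplex m. enorm m (z - y) \<le> enorm m (z - y'))"
    using std_simplex_nearest_point_unique by blast
  from theI'[OF this] show "proj_simplex m z \<in> std_simplex m"
    and "y \<in> std_simplex m \<Longrightarrow> enorm m (z - proj_simplex m z) \<le> enorm m (z - y)"
    unfolding proj_simplex_def by blast+
qed

lemma enorm_proj_simplex_le:
  assumes "0 < m" "y \<in> std_simplex m"
  shows "enorm m (y - proj_simplex m z) \<le> 2 * enorm m (y - z)"
proof -
  have "enorm m (y - proj_simplex m z) \<le> enorm m (y - z) + enorm m (z - proj_simplex m z)"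
    by (rule enorm_diff_triangle)
  also have "\<dots> \<le> enorm m (y - z) + enorm m (z - y)"
    using proj_simplex_nearest(2)[OF assms] by simp
  finally show ?thesis
    by (simp add: enorm_minus_commute[of m z y])
qed

lemma the_inv_into_lessThan:
  "bij_betw enum {..<n} S \<Longrightarrow> x \<in> S \<Longrightarrow> the_inv_into {..<n} enum x < n"
  using bij_betwE[OF bij_betw_the_inv_into] by blast

lemma std_simplex_reindex:
  assumes "bij_betw enum {..<m} S" "p \<in> std_simplex m"
  shows "u \<in> S \<Longrightarrow> 0 \<le> p (the_inv_into {..<m} enum u)"
    and "(\<Sum>u\<in>S. p (the_inv_into {..<m} enum u)) = 1"
proof -
  have inv: "bij_betw (the_inv_into {..<m} enum) S {..<m}"
    using bij_betw_the_inv_into[OF assms(1)] .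
  show "u \<in> S \<Longrightarrow> 0 \<le> p (the_inv_into {..<m} enum u)"
    using assms(2) the_inv_into_lessThan[OF assms(1)] by (auto simp: std_simplex_def)
  show "(\<Sum>u\<in>S. p (the_inv_into {..<m} enum u)) = 1"
    using assms(2) by (simp add: sum.reindex_bij_betw[OF inv] std_simplex_def)
qed

lemma edge_weight_pos: "weighted_graph V E W \<Longrightarrow> e \<in> E \<Longrightarrow> 0 < W e"
  by (simp add: weighted_graph_def)

lemma path_weight_nonneg:
  assumes "weighted_graph V E W" "is_path V E u v p"
  shows "0 \<le> path_weight W p"
  unfolding path_weight_def
  using assms by (intro sum_nonneg less_imp_le edge_weight_pos) (auto simp: is_path_def)

lemma path_weight_ge_first_edge:
  assumes "weighted_graph V E W" "is_path V E u v p" "2 \<le> length p"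
  shows "W {p ! 0, p ! 1} \<le> path_weight W p"
proof -
  have "0 < W {p ! t, p ! Suc t}" if "t \<in> {..<length p - 1}" for t
    using assms that by (intro edge_weight_pos) (auto simp: is_path_def)
  then have "W {p ! 0, p ! Suc 0} \<le> (\<Sum>t<length p - 1. W {p ! t, p ! Suc t})"
    using assms(3) by (intro member_le_sum[of 0]) (auto intro: less_imp_le)
  then show ?thesis
    by (simp add: path_weight_def)
qed

lemma graph_dist_ge:
  assumes "graph_connected V E" "u \<in> V" "v \<in> V"
    and "\<And>p. is_path V E u v p \<Longrightarrow> a \<le> path_weight W p"
  shows "a \<le> graph_dist V E W u v"
  unfolding graph_dist_def
proof (rule cInf_greatest)
  obtain p where "is_path V E u v p"
    using assms(1-3) by (auto simp: graph_connected_def)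
  then show "{path_weight W p |p. is_path V E u v p} \<noteq> {}"
    by auto
qed (use assms(4) in auto)

lemma graph_dist_nonneg:
  assumes "weighted_graph V E W" "graph_connected V E" "u \<in> V" "v \<in> V"
  shows "0 \<le> graph_dist V E W u v"
  using assms by (intro graph_dist_ge path_weight_nonneg)

lemma graph_dist_self:
  assumes "weighted_graph V E W" "graph_connected V E" "v \<in> V"
  shows "graph_dist V E W v v = 0"
proof (rule antisym)
  have "is_path V E v v [v]" "path_weight W [v] = 0"
    using assms(3) by (auto simp: is_path_def path_weight_def)
  moreover have "bdd_below {path_weight W p |p. is_path V E v v p}"
    using path_weight_nonneg[OF assms(1)] by (auto intro!: bdd_belowI[where m = 0])
  ultimately show "graph_dist V E W v v \<le> 0"
    unfolding graph_dist_def by (metis (mono_tags, lifting) cInf_lower mem_Collect_eq)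
qed (rule graph_dist_nonneg[OF assms(1,2,3,3)])

lemma graph_dist_ge_min_weight:
  assumes "weighted_graph V E W" "graph_connected V E" "u \<in> V" "v \<in> V" "u \<noteq> v"
    and "\<And>e. e \<in> E \<Longrightarrow> w \<le> W e"
  shows "w \<le> graph_dist V E W u v"
proof (rule graph_dist_ge[OF assms(2-4)])
  fix p assume p: "is_path V E u v p"
  have "length p \<noteq> 0" "length p \<noteq> 1"
    using p assms(5) by (auto simp: is_path_def length_Suc_conv)
  then have "2 \<le> length p"
    by linarith
  then have "w \<le> W {p ! 0, p ! 1}"
    using p by (intro assms(6)) (auto simp: is_path_def)
  also have "\<dots> \<le> path_weight W p"
    using path_weight_ge_first_edge[OF assms(1) p \<open>2 \<le> length p\<close>] .
  finally show "w \<le> path_weight W p" .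
qed

lemma finite_graph_dist_separated:
  assumes "finite V" "weighted_graph V E W" "graph_connected V E"
  obtains w where "0 < w"
    "\<And>u v. u \<in> V \<Longrightarrow> v \<in> V \<Longrightarrow> u \<noteq> v \<Longrightarrow> w \<le> graph_dist V E W u v"
proof -
  have "finite E"
    using assms(1,2) by (intro finite_subset[of E "Pow V"]) (auto simp: weighted_graph_def)
  define w where "w = Min (insert 1 (W ` E))"
  have "0 < w"
    using \<open>finite E\<close> edge_weight_pos[OF assms(2)] by (auto simp: w_def)
  moreover have "w \<le> W e" if "e \<in> E" for e
    using \<open>finite E\<close> that by (simp add: w_def)
  ultimately show ?thesis
    using that graph_dist_ge_min_weight[OF assms(2,3)] by blast
qed

lemma wasserstein1_dirac_le:
  assumes "finite S" "b \<in> S" "\<And>u v. u \<in> S \<Longrightarrow> v \<in> S \<Longrightarrow> 0 \<le> d u v"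
    and "\<And>u. u \<in> S \<Longrightarrow> 0 \<le> \<mu> u" "(\<Sum>u\<in>S. \<mu> u) = 1"
  shows "wasserstein1 S d \<mu> (dirac_mass b) \<le> (\<Sum>u\<in>S. \<mu> u * d u b)"
proof -
  define \<pi> where "\<pi> u v = \<mu> u * dirac_mass b v" for u v
  have "(\<Sum>v\<in>S. \<pi> u v * d u v) = (\<Sum>v\<in>S. if v = b then \<mu> u * d u b else 0)" for u
    by (rule sum.cong) (auto simp: \<pi>_def dirac_mass_def)
  then have "(\<Sum>v\<in>S. \<pi> u v * d u v) = \<mu> u * d u b" for u
    using assms(1,2) by simp
  then have cost: "(\<Sum>u\<in>S. \<Sum>v\<in>S. \<pi> u v * d u v) = (\<Sum>u\<in>S. \<mu> u * d u b)"
    by simp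
  have "(\<forall>u\<in>S. \<forall>v\<in>S. 0 \<le> \<pi> u v) \<and> (\<forall>u\<in>S. (\<Sum>v\<in>S. \<pi> u v) = \<mu> u)
      \<and> (\<forall>v\<in>S. (\<Sum>u\<in>S. \<pi> u v) = dirac_mass b v)"
    using assms by (simp add: \<pi>_def dirac_mass_def flip: sum_distrib_left sum_distrib_right)
  then show ?thesis
    unfolding wasserstein1_def cost[symmetric]
    by (intro cInf_lower bdd_belowI[where m = 0]) (auto intro!: sum_nonneg mult_nonneg_nonneg assms(3))
qed

lemma wasserstein1_dirac_le_diameter:
  assumes "finite S" "b \<in> S" "\<And>u v. u \<in> S \<Longrightarrow> v \<in> S \<Longrightarrow> 0 \<le> d u v" "d b b = 0"
    and "\<And>u. u \<in> S \<Longrightarrow> d u b \<le> D"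
    and "\<And>u. u \<in> S \<Longrightarrow> 0 \<le> \<mu> u" "(\<Sum>u\<in>S. \<mu> u) = 1"
  shows "wasserstein1 S d \<mu> (dirac_mass b) \<le> D * (1 - \<mu> b)"
proof -
  have "wasserstein1 S d \<mu> (dirac_mass b) \<le> (\<Sum>u\<in>S. \<mu> u * d u b)"
    using wasserstein1_dirac_le[OF assms(1-3,6,7)] .
  also have "\<dots> = (\<Sum>u\<in>S - {b}. \<mu> u * d u b)"
    using assms(1,2,4) by (simp add: sum.remove)
  also have "\<dots> \<le> (\<Sum>u\<in>S - {b}. \<mu> u * D)"
    using assms(5,6) by (intro sum_mono mult_left_mono) auto
  also have "\<dots> = D * (1 - \<mu> b)"
    using assms(1,2,7) by (simp add: sum_diff1 flip: sum_distrib_right)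
  finally show ?thesis .
qed

lemma wasserstein1_proj_simplex_dirac_le:
  assumes enum: "bij_betw enum {..<m} S" and "b \<in> S"
    and "\<And>u v. u \<in> S \<Longrightarrow> v \<in> S \<Longrightarrow> 0 \<le> d u v" "d b b = 0"
    and "\<And>u. u \<in> S \<Longrightarrow> d u b \<le> D" "0 \<le> D"
  shows "wasserstein1 S d (\<lambda>u. proj_simplex m z (the_inv_into {..<m} enum u)) (dirac_mass b)
    \<le> 2 * D * enorm m (dirac_mass (the_inv_into {..<m} enum b) - z)"
proof -
  define j where "j = the_inv_into {..<m} enum b"
  define p where "p = proj_simplex m z"
  have "j < m"
    using the_inv_into_lessThan[OF enum \<open>b \<in> S\<close>] by (simp add: j_def)
  have "p \<in> std_simplex m"
    unfolding p_def using \<open>j < m\<close> by (intro proj_simplex_nearest(1)) auto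
  have "1 - p j \<le> \<bar>(dirac_mass j - p) j\<bar>"
    by (simp add: dirac_mass_def)
  also have "\<dots> \<le> enorm m (dirac_mass j - p)"
    using abs_le_enorm[OF \<open>j < m\<close>] .
  also have "\<dots> \<le> 2 * enorm m (dirac_mass j - z)"
    unfolding p_def using \<open>j < m\<close> by (intro enorm_proj_simplex_le dirac_mass_in_std_simplex) auto
  finally have "D * (1 - p j) \<le> D * (2 * enorm m (dirac_mass j - z))"
    using \<open>0 \<le> D\<close> by (rule mult_left_mono)
  moreover have "wasserstein1 S d (\<lambda>u. p (the_inv_into {..<m} enum u)) (dirac_mass b) \<le> D * (1 - p j)"
    unfolding j_def
  proof (rule wasserstein1_dirac_le_diameter)
    show "finite S"
      using bij_betw_finite[OF enum] by simp
  qed (use assms std_simplex_reindex[OF enum \<open>p \<in> std_simplex m\<close>] in auto)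
  ultimately show ?thesis
    by (simp add: p_def j_def)
qed

definition tent :: "real \<Rightarrow> real \<Rightarrow> real" where
  "tent w s = max 0 (1 - \<bar>s\<bar> / w)"

lemma tent_0 [simp]: "tent w 0 = 1"
  by (simp add: tent_def)

lemma tent_eq_0: "0 < w \<Longrightarrow> w \<le> \<bar>s\<bar> \<Longrightarrow> tent w s = 0"
  by (simp add: tent_def field_simps)

lemma tent_lipschitz:
  assumes "0 < w"
  shows "\<bar>tent w s - tent w t\<bar> \<le> \<bar>s - t\<bar> / w"
proof -
  have "\<bar>\<bar>s\<bar> / w - \<bar>t\<bar> / w\<bar> \<le> \<bar>s - t\<bar> / w"
    using assms by (simp add: abs_triangle_ineq3 divide_right_mono flip: diff_divide_distrib)
  then show ?thesis
    unfolding tent_def by linarith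
qed

definition tent_interpolant ::
  "real \<Rightarrow> 'a set \<Rightarrow> ('a \<Rightarrow> nat) \<Rightarrow> ('a \<Rightarrow> nat) \<Rightarrow> (nat \<Rightarrow> real) \<Rightarrow> (nat \<Rightarrow> real)" where
  "tent_interpolant w V ix jy z = (\<lambda>j. \<Sum>x\<in>V. if jy x = j then tent w (z (ix x)) else 0)"

lemma tent_interpolant_eq_dirac_mass:
  assumes "finite V" "0 < w" "y \<in> V" "z (ix y) = 0"
    and "\<And>x. x \<in> V \<Longrightarrow> x \<noteq> y \<Longrightarrow> w \<le> \<bar>z (ix x)\<bar>"
  shows "tent_interpolant w V ix jy z = dirac_mass (jy y)"
proof
  fix j
  have "tent_interpolant w V ix jy z j = (\<Sum>x\<in>V. if x = y then dirac_mass (jy y) j else 0)"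
    unfolding tent_interpolant_def
    using assms(2,4,5) by (intro sum.cong) (auto simp: tent_eq_0 dirac_mass_def)
  then show "tent_interpolant w V ix jy z j = dirac_mass (jy y) j"
    using assms(1,3) by simp
qed

lemma has_modulus_tent_interpolant:
  assumes "finite V" "0 < w" "\<And>x. x \<in> V \<Longrightarrow> ix x < n"
  shows "has_modulus n m (\<lambda>t. real m * real (card V) / w * t) (tent_interpolant w V ix jy)"
  unfolding has_modulus_def
proof (intro ballI)
  fix z z' :: "nat \<Rightarrow> real"
  define g where "g = tent_interpolant w V ix jy"
  define a where "a = enorm n (z - z')"
  have "\<bar>g z j - g z' j\<bar> \<le> real (card V) * (a / w)" for j
  proof -
    have "\<bar>g z j - g z' j\<bar> \<le> (\<Sum>x\<in>V. \<bar>tent w (z (ix x)) - tent w (z' (ix x))\<bar>)"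
      unfolding g_def tent_interpolant_def sum_subtractf[symmetric]
      by (rule order_trans[OF sum_abs sum_mono]) auto
    also have "\<dots> \<le> (\<Sum>x\<in>V. a / w)"
    proof (rule sum_mono)
      fix x assume "x \<in> V"
      have "\<bar>tent w (z (ix x)) - tent w (z' (ix x))\<bar> \<le> \<bar>(z - z') (ix x)\<bar> / w"
        using tent_lipschitz[OF assms(2)] by simp
      also have "\<dots> \<le> a / w"
        using abs_le_enorm[OF assms(3)[OF \<open>x \<in> V\<close>], of "z - z'"] assms(2)
        by (simp add: a_def divide_right_mono)
      finally show "\<bar>tent w (z (ix x)) - tent w (z' (ix x))\<bar> \<le> a / w" .
    qed
    finally show ?thesis
      by simp
  qed
  then have "enorm m (g z - g z') \<le> (\<Sum>j<m. real (card V) * (a / w))"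
    by (intro order_trans[OF enorm_le_sum_abs sum_mono]) simp
  then show "enorm m (g z - g z') \<le> real m * real (card V) / w * enorm n (z - z')"
    by (simp add: a_def)
qed

lemma cont_modulus_linear: "0 \<le> L \<Longrightarrow> cont_modulus (\<lambda>t. L * t)"
  unfolding cont_modulus_def by (auto intro!: continuous_intros)

lemma universal_approximator_approx:
  assumes "universal_approximator F r" "cont_modulus \<omega>" "has_modulus n m \<omega> g"
    and "K \<subseteq> rvec n" "compact K" "0 < \<delta>"
  obtains c fh where "1 \<le> c" "fh \<in> F n m c" "\<And>x. x \<in> K \<Longrightarrow> enorm m (g x - fh x) < \<delta>"
proof -
  have "(\<lambda>c. r \<omega> K n m c) \<longlonglongrightarrow> 0"
    using assms(1) by (simp add: universal_approximator_def)
  then have "\<forall>\<^sub>F c in sequentially. r \<omega> K n m c < \<delta>"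
    using assms(6) by (rule order_tendstoD(2))
  then obtain c0 where c0: "\<And>c. c0 \<le> c \<Longrightarrow> r \<omega> K n m c < \<delta>"
    by (auto simp: eventually_sequentially)
  define c where "c = max c0 1"
  have "\<exists>fh\<in>F n m c. \<forall>x\<in>K. enorm m (g x - fh x) \<le> r \<omega> K n m c"
    using assms(1-5) unfolding universal_approximator_def by blast
  then obtain fh where fh: "fh \<in> F n m c" "\<And>x. x \<in> K \<Longrightarrow> enorm m (g x - fh x) \<le> r \<omega> K n m c"
    by blast
  show ?thesis
  proof (rule that)
    show "1 \<le> c" "fh \<in> F n m c"
      using fh(1) by (simp_all add: c_def)
    show "enorm m (g x - fh x) < \<delta>" if "x \<in> K" for x
      using fh(2)[OF that] c0[of c] by (simp add: c_def)
  qed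
qed

definition dist_vector ::
  "'a set \<Rightarrow> 'a set set \<Rightarrow> ('a set \<Rightarrow> real) \<Rightarrow> (nat \<Rightarrow> 'a) \<Rightarrow> 'a \<Rightarrow> nat \<Rightarrow> real" where
  "dist_vector V E W enum x = (\<lambda>i. if i < card V then graph_dist V E W x (enum i) else 0)"

lemma dist_vector_in_rvec: "dist_vector V E W enum x \<in> rvec (card V)"
  by (simp add: dist_vector_def rvec_def)

lemma dist_vector_the_inv_into:
  assumes "bij_betw enum {..<card V} V" "y \<in> V"
  shows "dist_vector V E W enum x (the_inv_into {..<card V} enum y) = graph_dist V E W x y"
  using the_inv_into_lessThan[OF assms] f_the_inv_into_f_bij_betw[OF assms(1)] assms(2)
  by (simp add: dist_vector_def)

lemma tent_interpolant_dist_vector: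
  assumes "finite V" "weighted_graph V E W" "graph_connected V E" "bij_betw enum {..<card V} V"
    and "0 < w" "\<And>u v. u \<in> V \<Longrightarrow> v \<in> V \<Longrightarrow> u \<noteq> v \<Longrightarrow> w \<le> graph_dist V E W u v"
    and "x \<in> V"
  shows "tent_interpolant w V (the_inv_into {..<card V} enum) jy (dist_vector V E W enum x)
    = dirac_mass (jy x)"
proof (rule tent_interpolant_eq_dirac_mass)
  fix y assume "y \<in> V" "y \<noteq> x"
  then show "w \<le> \<bar>dist_vector V E W enum x (the_inv_into {..<card V} enum y)\<bar>"
    using assms(6,7) by (simp add: dist_vector_the_inv_into[OF assms(4)] order_trans[OF _ abs_ge_self])
qed (use assms graph_dist_self[OF assms(2,3,7)] dist_vector_the_inv_into[OF assms(4,7)] in auto)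

lemma lipschitz_interpolant_dist_vector:
  assumes "finite V" "weighted_graph V E W" "graph_connected V E" "bij_betw enum {..<card V} V"
  obtains g L where "0 \<le> L" "has_modulus (card V) m (\<lambda>t. L * t) g"
    "\<And>x. x \<in> V \<Longrightarrow> g (dist_vector V E W enum x) = dirac_mass (jy x)"
proof -
  obtain w where w: "0 < w" "\<And>u v. u \<in> V \<Longrightarrow> v \<in> V \<Longrightarrow> u \<noteq> v \<Longrightarrow> w \<le> graph_dist V E W u v"
    using finite_graph_dist_separated[OF assms(1-3)] by blast
  show ?thesis
  proof (rule that)
    show "0 \<le> real m * real (card V) / w"
      using w(1) by simp
    show "has_modulus (card V) m (\<lambda>t. real m * real (card V) / w * t)
        (tent_interpolant w V (the_inv_into {..<card V} enum) jy)"
      using assms(1) w(1) the_inv_into_lessThan[OF assms(4)] by (rule has_modulus_tent_interpolant)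
    show "tent_interpolant w V (the_inv_into {..<card V} enum) jy (dist_vector V E W enum x)
        = dirac_mass (jy x)" if "x \<in> V" for x
      using tent_interpolant_dist_vector[OF assms w that] .
  qed
qed

lemma finite_graph_dist_bounded:
  assumes "finite V"
  obtains D where "0 \<le> D" "\<And>u v. u \<in> V \<Longrightarrow> v \<in> V \<Longrightarrow> graph_dist V E W u v \<le> D"
proof
  show "graph_dist V E W u v \<le> Max (insert 0 (case_prod (graph_dist V E W) ` (V \<times> V)))"
    if "u \<in> V" "v \<in> V" for u v
    using assms that by (intro Max_ge) auto
qed (use assms in auto)

theorem mainTheorem11:
  fixes V :: "'a set" and E :: "'a set set" and W :: "'a set \<Rightarrow> real"
    and V' :: "'b set" and E' :: "'b set set" and W' :: "'b set \<Rightarrow> real"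
    and f :: "'a \<Rightarrow> 'b"
    and F :: "nat \<Rightarrow> nat \<Rightarrow> nat \<Rightarrow> ((nat \<Rightarrow> real) \<Rightarrow> (nat \<Rightarrow> real)) set"
    and r :: "(real \<Rightarrow> real) \<Rightarrow> (nat \<Rightarrow> real) set \<Rightarrow> nat \<Rightarrow> nat \<Rightarrow> nat \<Rightarrow> real"
    and enumV :: "nat \<Rightarrow> 'a" and enumV' :: "nat \<Rightarrow> 'b"
    and \<epsilon> :: real
  assumes "finite V" "weighted_graph V E W" "graph_connected V E"
    and "finite V'" "weighted_graph V' E' W'" "graph_connected V' E'"
    and "f ` V \<subseteq> V'"
    and "universal_approximator F r"
    and "bij_betw enumV {..<card V} V"
    and "bij_betw enumV' {..<card V'} V'"
    and "\<epsilon> > 0"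
  shows "\<exists>c\<ge>1. \<exists>fh \<in> F (card V) (card V') c.
           \<forall>x\<in>V. wasserstein1 V' (graph_dist V' E' W')
              (\<lambda>u. proj_simplex (card V')
                     (fh (\<lambda>i. if i < card V then graph_dist V E W x (enumV i) else 0))
                     (the_inv_into {..<card V'} enumV' u))
              (dirac_mass (f x)) < \<epsilon>"
proof -
  define X where "X = dist_vector V E W enumV"
  define jx where "jx = the_inv_into {..<card V'} enumV'"
  obtain g L where L: "0 \<le> L" "has_modulus (card V) (card V') (\<lambda>t. L * t) g"
    and gX: "\<And>x. x \<in> V \<Longrightarrow> g (X x) = dirac_mass ((jx \<circ> f) x)"
    using lipschitz_interpolant_dist_vector[OF assms(1-3,9)] unfolding X_def by blast
  obtain D where D: "0 \<le> D" "\<And>u v. u \<in> V' \<Longrightarrow> v \<in> V' \<Longrightarrow> graph_dist V' E' W' u v \<le> D"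
    using finite_graph_dist_bounded[OF assms(4)] by blast
  have "X ` V \<subseteq> rvec (card V)" "compact (X ` V)" "0 < \<epsilon> / (2 * D + 1)"
    using assms(1,11) D(1) dist_vector_in_rvec by (auto simp: X_def finite_imp_compact)
  then obtain c fh where c: "1 \<le> c" "fh \<in> F (card V) (card V') c"
    and fh: "\<And>z. z \<in> X ` V \<Longrightarrow> enorm (card V') (g z - fh z) < \<epsilon> / (2 * D + 1)"
    using universal_approximator_approx[OF assms(8) cont_modulus_linear[OF L(1)] L(2)] by blast
  have "wasserstein1 V' (graph_dist V' E' W') (\<lambda>u. proj_simplex (card V') (fh (X x)) (jx u))
      (dirac_mass (f x)) < \<epsilon>" if "x \<in> V" for x
  proof -
    have "wasserstein1 V' (graph_dist V' E' W') (\<lambda>u. proj_simplex (card V') (fh (X x)) (jx u))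
        (dirac_mass (f x)) \<le> 2 * D * enorm (card V') (g (X x) - fh (X x))"
      unfolding jx_def gX[OF that] o_apply using assms(5-7,10) D that
      by (intro wasserstein1_proj_simplex_dirac_le) (auto simp: graph_dist_nonneg graph_dist_self)
    also have "\<dots> \<le> 2 * D * (\<epsilon> / (2 * D + 1))"
      using fh[of "X x"] that D(1) by (intro mult_left_mono) auto
    also have "\<dots> < \<epsilon>"
      using assms(11) D(1) by (simp add: field_simps)
    finally show ?thesis .
  qed
  then show ?thesis
    using c unfolding X_def dist_vector_def jx_def by blast
qed

end
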